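(* Let $\Gamma$ be a finite simple non-abelian group with identity $e$, and let $G=\Gamma^\omega$ with the product topology (each factor discrete) and normalized Haar measure. Let $\mathcal U$ be a free ultrafilter on $\omega$. Define $\psi:G\to\Gamma$ by letting $\psi(x)$, for $x=(x_n)\in G$, be the unique $a\in\Gamma$ with $\{n<\omega: x_n=a\}\in\mathcal U$ (so $\psi$ is a surjective homomorphism whose kernel is $G_{\mathcal I}=\{x\in G:\{n:x_n\ne e\}\notin\mathcal U\}$). Let $g\in\Gamma$, $g\neq e$, let $B$ be the subgroup of $\Gamma$ generated by $g$, and let $H=\psi^{-1}[B]$. Then $H$ is a subgroup of $G$ which is not normal and not Haar measurable. *)

theory Defs
  imports "HOL-Probability.Probability" "HOL-Algebra.SimpleGroups" "HOL-Algebra.Product_Groups"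
    "HOL-Algebra.Generated_Groups"
begin

definition free_ultrafilter :: "nat set set \<Rightarrow> bool" where
  "free_ultrafilter U \<longleftrightarrow>
     UNIV \<in> U \<and> {} \<notin> U \<and>
     (\<forall>A B. A \<in> U \<and> A \<subseteq> B \<longrightarrow> B \<in> U) \<and>
     (\<forall>A B. A \<in> U \<and> B \<in> U \<longrightarrow> A \<inter> B \<in> U) \<and>
     (\<forall>A. A \<in> U \<or> - A \<in> U) \<and>
     (\<forall>A. finite A \<longrightarrow> A \<notin> U)"

definition power_group :: "('a, 'c) monoid_scheme \<Rightarrow> (nat \<Rightarrow> 'a) monoid" where
  "power_group \<Gamma> = product_group UNIV (\<lambda>_. \<Gamma>)"

text \<open>Normalized Haar measure on Gamma^omega (product topology, discrete factors):
  the product of the uniform probability measures on the finite factor.\<close>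
definition haar_power :: "('a, 'c) monoid_scheme \<Rightarrow> (nat \<Rightarrow> 'a) measure" where
  "haar_power \<Gamma> = (\<Pi>\<^sub>M n\<in>(UNIV::nat set). uniform_count_measure (carrier \<Gamma>))"

definition haar_measurable :: "('a, 'c) monoid_scheme \<Rightarrow> (nat \<Rightarrow> 'a) set \<Rightarrow> bool" where
  "haar_measurable \<Gamma> S \<longleftrightarrow> S \<in> sets (completion (haar_power \<Gamma>))"

definition ulim :: "('a, 'c) monoid_scheme \<Rightarrow> nat set set \<Rightarrow> (nat \<Rightarrow> 'a) \<Rightarrow> 'a" where
  "ulim \<Gamma> U x = (THE a. a \<in> carrier \<Gamma> \<and> {n. x n = a} \<in> U)"

end

theory Submission
  imports Defs
begin

text \<open>
  The ultralimit map \<open>\<psi>\<close> is a homomorphism from \<open>\<Gamma>\<^sup>\<omega>\<close> onto \<open>\<Gamma>\<close>, so \<open>H = \<psi>\<^sup>-\<^sup>1[B]\<close> is a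
  subgroup, and it can only be normal if \<open>B\<close> is; but a cyclic subgroup of a non-abelian simple
  group is not normal.

  Changing finitely many coordinates does not change \<open>\<psi>\<close>, so \<open>H\<close> is invariant under
  translation by the countable group of finitely supported sequences. A Haar-measurable set with
  this invariance differs by a null set from a measurable invariant set \<open>T \<subseteq> H\<close>, and \<open>T\<close> is
  independent of every cylinder set, hence has measure 0 or 1. Measure 1 is impossible because
  the translate of \<open>T\<close> by a constant sequence \<open>c \<notin> B\<close> lies in another coset of \<open>H\<close>; measure 0
  is impossible because finitely many constant translates of \<open>H\<close> cover \<open>\<Gamma>\<^sup>\<omega>\<close>.
\<close>

section \<open>Free ultrafilters and ultralimits\<close>

lemma free_ultrafilterD:
  assumes "free_ultrafilter U"
  shows free_ultrafilter_UNIV: "UNIV \<in> U"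
    and free_ultrafilter_mono: "A \<in> U \<Longrightarrow> A \<subseteq> B \<Longrightarrow> B \<in> U"
    and free_ultrafilter_Int: "A \<in> U \<Longrightarrow> B \<in> U \<Longrightarrow> A \<inter> B \<in> U"
    and free_ultrafilter_Compl: "A \<notin> U \<Longrightarrow> - A \<in> U"
    and free_ultrafilter_finite: "finite A \<Longrightarrow> A \<notin> U"
  using assms unfolding free_ultrafilter_def by meson+

lemma free_ultrafilter_Int_nonempty:
  "free_ultrafilter U \<Longrightarrow> A \<in> U \<Longrightarrow> B \<in> U \<Longrightarrow> A \<inter> B \<noteq> {}"
  using free_ultrafilter_Int free_ultrafilter_finite by fastforce

lemma free_ultrafilter_cofinite: "free_ultrafilter U \<Longrightarrow> finite A \<Longrightarrow> - A \<in> U"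
  using free_ultrafilter_Compl free_ultrafilter_finite by blast

lemma free_ultrafilter_finite_UN:
  assumes U: "free_ultrafilter U" and "finite I" and "(\<Union>i\<in>I. X i) \<in> U"
  shows "\<exists>i\<in>I. X i \<in> U"
  using assms(2,3)
proof (induction I rule: finite_induct)
  case empty
  then show ?case using free_ultrafilter_finite[OF U] by simp
next
  case (insert i I)
  show ?case
  proof (cases "X i \<in> U")
    case False
    then have "(\<Union>j\<in>insert i I. X j) \<inter> - X i \<in> U"
      using insert.prems free_ultrafilter_Compl[OF U] free_ultrafilter_Int[OF U] by blast
    then have "(\<Union>j\<in>I. X j) \<in> U" by (rule free_ultrafilter_mono[OF U]) auto
    then show ?thesis using insert.IH by blast
  qed simp
qed

lemma ulim_eqI:
  assumes U: "free_ultrafilter U" and "a \<in> carrier \<Gamma>" and "{n. x n = a} \<in> U"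
  shows "ulim \<Gamma> U x = a"
  unfolding ulim_def
proof (rule the_equality)
  fix b assume "b \<in> carrier \<Gamma> \<and> {n. x n = b} \<in> U"
  then have "{n. x n = a} \<inter> {n. x n = b} \<noteq> {}"
    using free_ultrafilter_Int_nonempty[OF U] assms(3) by blast
  then show "b = a" by auto
qed (use assms in simp)

lemma ulim_in_carrier_eventually:
  assumes U: "free_ultrafilter U" and "finite (carrier \<Gamma>)" and x: "\<And>n. x n \<in> carrier \<Gamma>"
  shows ulim_in_carrier: "ulim \<Gamma> U x \<in> carrier \<Gamma>"
    and ulim_eventually: "{n. x n = ulim \<Gamma> U x} \<in> U"
proof -
  have "(\<Union>a\<in>carrier \<Gamma>. {n. x n = a}) = UNIV" using x by auto
  then obtain a where a: "a \<in> carrier \<Gamma>" "{n. x n = a} \<in> U"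
    using free_ultrafilter_finite_UN[OF U assms(2), of "\<lambda>a. {n. x n = a}"]
      free_ultrafilter_UNIV[OF U] by auto
  with ulim_eqI[OF U a] show "ulim \<Gamma> U x \<in> carrier \<Gamma>" "{n. x n = ulim \<Gamma> U x} \<in> U"
    by simp_all
qed

lemma ulim_const: "free_ultrafilter U \<Longrightarrow> a \<in> carrier \<Gamma> \<Longrightarrow> ulim \<Gamma> U (\<lambda>_. a) = a"
  by (rule ulim_eqI) (simp_all add: free_ultrafilter_UNIV)

lemma ulim_mult:
  assumes U: "free_ultrafilter U" and "finite (carrier \<Gamma>)" and "monoid \<Gamma>"
    and x: "\<And>n. x n \<in> carrier \<Gamma>" and y: "\<And>n. y n \<in> carrier \<Gamma>"
  shows "ulim \<Gamma> U (\<lambda>n. x n \<otimes>\<^bsub>\<Gamma>\<^esub> y n) = ulim \<Gamma> U x \<otimes>\<^bsub>\<Gamma>\<^esub> ulim \<Gamma> U y"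
proof (rule ulim_eqI[OF U])
  show "ulim \<Gamma> U x \<otimes>\<^bsub>\<Gamma>\<^esub> ulim \<Gamma> U y \<in> carrier \<Gamma>"
    using ulim_in_carrier[OF U assms(2)] x y monoid.m_closed[OF assms(3)] by blast
  have "{n. x n = ulim \<Gamma> U x} \<inter> {n. y n = ulim \<Gamma> U y} \<in> U"
    using ulim_eventually[OF U assms(2)] x y free_ultrafilter_Int[OF U] by blast
  then show "{n. x n \<otimes>\<^bsub>\<Gamma>\<^esub> y n = ulim \<Gamma> U x \<otimes>\<^bsub>\<Gamma>\<^esub> ulim \<Gamma> U y} \<in> U"
    by (rule free_ultrafilter_mono[OF U]) auto
qed

lemma ulim_eq_if_finite_diff:
  assumes U: "free_ultrafilter U" and "finite (carrier \<Gamma>)"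
    and y: "\<And>n. y n \<in> carrier \<Gamma>" and "finite {n. x n \<noteq> y n}"
  shows "ulim \<Gamma> U x = ulim \<Gamma> U y"
proof (rule ulim_eqI[OF U ulim_in_carrier[OF U assms(2) y]])
  have "{n. y n = ulim \<Gamma> U y} \<inter> - {n. x n \<noteq> y n} \<in> U"
    using ulim_eventually[OF U assms(2) y] free_ultrafilter_cofinite[OF U assms(4)]
    by (rule free_ultrafilter_Int[OF U])
  then show "{n. x n = ulim \<Gamma> U y} \<in> U" by (rule free_ultrafilter_mono[OF U]) auto
qed

lemma carrier_power_group: "carrier (power_group \<Gamma>) = {x. \<forall>n. x n \<in> carrier \<Gamma>}"
  by (auto simp: power_group_def PiE_iff)

lemma mult_power_group: "x \<otimes>\<^bsub>power_group \<Gamma>\<^esub> y = (\<lambda>n. x n \<otimes>\<^bsub>\<Gamma>\<^esub> y n)"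
  by (simp add: power_group_def restrict_def)

lemma group_power_group: "group \<Gamma> \<Longrightarrow> group (power_group \<Gamma>)"
  by (simp add: power_group_def)

lemma ulim_group_hom:
  assumes U: "free_ultrafilter U" and "finite (carrier \<Gamma>)" and "group \<Gamma>"
  shows "group_hom (power_group \<Gamma>) \<Gamma> (ulim \<Gamma> U)"
proof -
  have "ulim \<Gamma> U \<in> hom (power_group \<Gamma>) \<Gamma>"
    using ulim_in_carrier[OF U assms(2)] ulim_mult[OF U assms(2) group.is_monoid[OF assms(3)]]
    by (intro homI) (auto simp: carrier_power_group mult_power_group)
  then show ?thesis
    using assms(3) group_power_group by (simp add: group_hom_def group_hom_axioms_def)
qed

lemma ulim_surj:
  assumes U: "free_ultrafilter U" and "finite (carrier \<Gamma>)"
  shows "ulim \<Gamma> U ` carrier (power_group \<Gamma>) = carrier \<Gamma>"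
proof
  show "carrier \<Gamma> \<subseteq> ulim \<Gamma> U ` carrier (power_group \<Gamma>)"
  proof
    fix a assume "a \<in> carrier \<Gamma>"
    then have "a = ulim \<Gamma> U (\<lambda>_. a)" "(\<lambda>_. a) \<in> carrier (power_group \<Gamma>)"
      by (simp_all add: ulim_const[OF U] carrier_power_group)
    then show "a \<in> ulim \<Gamma> U ` carrier (power_group \<Gamma>)" by blast
  qed
qed (use ulim_in_carrier[OF assms] in \<open>auto simp: carrier_power_group\<close>)

lemma (in group_hom) subgroup_vimage:
  assumes "subgroup B H"
  shows "subgroup {x \<in> carrier G. h x \<in> B} G"
proof (rule G.subgroupI)
  interpret B: subgroup B H by fact
  show "{x \<in> carrier G. h x \<in> B} \<noteq> {}" by force
  fix a b assume "a \<in> {x \<in> carrier G. h x \<in> B}" "b \<in> {x \<in> carrier G. h x \<in> B}"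
  then show "inv a \<in> {x \<in> carrier G. h x \<in> B}" "a \<otimes> b \<in> {x \<in> carrier G. h x \<in> B}"
    by auto
qed auto

lemma (in group_hom) normal_vimage_imp_normal:
  assumes surj: "h ` carrier G = carrier H" and "B \<subseteq> carrier H"
    and "{x \<in> carrier G. h x \<in> B} \<lhd> G"
  shows "B \<lhd> H"
proof -
  have "h ` {x \<in> carrier G. h x \<in> B} = B"
    using assms(2) unfolding surj[symmetric] by blast
  with normal.surj_hom_normal_subgroup[OF assms(3) group_hom_axioms surj] show ?thesis
    by simp
qed

lemma (in simple_group) cyclic_subgroup_not_normal:
  assumes "\<not> comm_group G" and g: "g \<in> carrier G" "g \<noteq> \<one>"
  shows "\<not> generate G {g} \<lhd> G"
proof
  assume "generate G {g} \<lhd> G"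
  moreover have "g \<in> generate G {g}" by (rule generate.incl) simp
  ultimately have "generate G {g} = carrier G"
    using no_real_normal_subgroup g(2) by blast
  then have "carrier G = range (\<lambda>k::int. g [^] k)" using g(1) by (auto simp: generate_pow)
  then have "cyclic_group G" using g(1) cyclic_group by blast
  with assms(1) show False using cyclic_imp_abelian_group by blast
qed

section \<open>Haar measure on \<open>\<Gamma>\<^sup>\<omega>\<close>\<close>

lemma distr_uniform_count_measure_bij:
  assumes "finite A" and bij: "bij_betw f A A"
  shows "distr (uniform_count_measure A) (uniform_count_measure A) f = uniform_count_measure A"
proof (rule measure_eqI)
  have f: "f \<in> uniform_count_measure A \<rightarrow>\<^sub>M uniform_count_measure A"
    using bij_betwE[OF bij]
    by (auto simp: measurable_def space_uniform_count_measure sets_uniform_count_measure)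
  fix X assume "X \<in> sets (distr (uniform_count_measure A) (uniform_count_measure A) f)"
  then have X: "X \<subseteq> A" by (simp add: sets_uniform_count_measure)
  have "X \<subseteq> f ` (f -` X \<inter> A)"
  proof
    fix x assume "x \<in> X"
    moreover from this obtain a where "a \<in> A" "x = f a"
      using X bij_betw_imp_surj_on[OF bij] by blast
    ultimately show "x \<in> f ` (f -` X \<inter> A)" by blast
  qed
  then have "bij_betw f (f -` X \<inter> A) X" by (intro bij_betw_subset[OF bij]) auto
  then have "card (f -` X \<inter> A) = card X" by (rule bij_betw_same_card)
  then show "emeasure (distr (uniform_count_measure A) (uniform_count_measure A) f) X
      = emeasure (uniform_count_measure A) X"
    using X assms(1) f
    by (simp add: emeasure_distr space_uniform_count_measure sets_uniform_count_measure
        emeasure_uniform_count_measure)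
qed simp

lemma (in product_prob_space) distr_PiM_componentwise:
  assumes f: "\<And>i. i \<in> I \<Longrightarrow> f i \<in> M i \<rightarrow>\<^sub>M M i"
    and preserving: "\<And>i. i \<in> I \<Longrightarrow> distr (M i) (M i) (f i) = M i"
  shows "distr (PiM I M) (PiM I M) (\<lambda>x. \<lambda>i\<in>I. f i (x i)) = PiM I M"
proof (rule PiM_eq)
  have map: "(\<lambda>x. \<lambda>i\<in>I. f i (x i)) \<in> PiM I M \<rightarrow>\<^sub>M PiM I M"
    using f by (intro measurable_restrict) (auto intro: measurable_compose[OF measurable_component_singleton])
  fix J F assume J: "finite J" "J \<subseteq> I" and F: "\<And>j. j \<in> J \<Longrightarrow> F j \<in> sets (M j)"
  have "(\<lambda>x. \<lambda>i\<in>I. f i (x i)) -` prod_emb I M J (Pi\<^sub>E J F) \<inter> space (PiM I M)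
      = prod_emb I M J (\<Pi>\<^sub>E j\<in>J. f j -` F j \<inter> space (M j))"
    using J measurable_space[OF f] by (auto simp: prod_emb_def space_PiM PiE_iff subset_eq)
  then have "emeasure (distr (PiM I M) (PiM I M) (\<lambda>x. \<lambda>i\<in>I. f i (x i))) (prod_emb I M J (Pi\<^sub>E J F))
      = emeasure (PiM I M) (prod_emb I M J (\<Pi>\<^sub>E j\<in>J. f j -` F j \<inter> space (M j)))"
    using J F by (simp add: emeasure_distr[OF map])
  also have "\<dots> = (\<Prod>j\<in>J. emeasure (M j) (f j -` F j \<inter> space (M j)))"
    using J F f by (intro emeasure_PiM_emb) (auto intro: measurable_sets)
  also have "\<dots> = (\<Prod>j\<in>J. emeasure (M j) (F j))"
  proof (rule prod.cong)
    fix j assume "j \<in> J"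
    with J F f preserving show "emeasure (M j) (f j -` F j \<inter> space (M j)) = emeasure (M j) (F j)"
      by (metis emeasure_distr subsetD)
  qed simp
  finally show "emeasure (distr (PiM I M) (PiM I M) (\<lambda>x. \<lambda>i\<in>I. f i (x i))) (prod_emb I M J (Pi\<^sub>E J F))
      = (\<Prod>j\<in>J. emeasure (M j) (F j))" .
qed simp

locale finite_group_power = group \<Gamma> for \<Gamma> :: "('a, 'c) monoid_scheme" (structure) +
  assumes finite_carrier: "finite (carrier \<Gamma>)"
begin

abbreviation G :: "(nat \<Rightarrow> 'a) monoid" where "G \<equiv> power_group \<Gamma>"
abbreviation \<mu> :: "(nat \<Rightarrow> 'a) measure" where "\<mu> \<equiv> haar_power \<Gamma>"

lemma space_haar_power: "space \<mu> = carrier G"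
  by (auto simp: haar_power_def space_PiM PiE_iff space_uniform_count_measure carrier_power_group)

lemma product_prob_space_factors: "product_prob_space (\<lambda>_::nat. uniform_count_measure (carrier \<Gamma>))"
  using prob_space_uniform_count_measure[OF finite_carrier] one_closed
  by (intro product_prob_spaceI) blast

lemma prob_space_haar_power: "prob_space \<mu>"
proof -
  interpret product_prob_space "\<lambda>_::nat. uniform_count_measure (carrier \<Gamma>)" UNIV
    by (rule product_prob_space_factors)
  show ?thesis unfolding haar_power_def by (rule P.prob_space_axioms)
qed

lemma translate_componentwise:
  "(\<lambda>x. z \<otimes>\<^bsub>G\<^esub> x) = (\<lambda>x. \<lambda>i\<in>UNIV. (\<lambda>a. z i \<otimes> a) (x i))"
  by (simp add: mult_power_group restrict_def)

lemma measurable_translate: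
  assumes "z \<in> carrier G"
  shows "(\<lambda>x. z \<otimes>\<^bsub>G\<^esub> x) \<in> \<mu> \<rightarrow>\<^sub>M \<mu>"
  unfolding translate_componentwise haar_power_def
  using assms by (intro measurable_restrict measurable_compose[OF measurable_component_singleton])
    (auto simp: measurable_def space_uniform_count_measure sets_uniform_count_measure carrier_power_group)

lemma distr_translate:
  assumes z: "z \<in> carrier G"
  shows "distr \<mu> \<mu> (\<lambda>x. z \<otimes>\<^bsub>G\<^esub> x) = \<mu>"
proof -
  interpret product_prob_space "\<lambda>_::nat. uniform_count_measure (carrier \<Gamma>)" UNIV
    by (rule product_prob_space_factors)
  have zi: "z i \<in> carrier \<Gamma>" for i using z by (simp add: carrier_power_group)
  have bij: "bij_betw (\<lambda>a. z i \<otimes> a) (carrier \<Gamma>) (carrier \<Gamma>)" for i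
    using zi by (intro bij_betwI[where g = "\<lambda>a. inv (z i) \<otimes> a"]) (auto simp: m_assoc[symmetric])
  show ?thesis
    unfolding translate_componentwise haar_power_def
    using bij_betwE[OF bij]
    by (intro distr_PiM_componentwise distr_uniform_count_measure_bij[OF finite_carrier bij])
      (auto simp: measurable_def space_uniform_count_measure sets_uniform_count_measure)
qed

lemma
  assumes "z \<in> carrier G" and "A \<in> sets \<mu>"
  shows sets_translate: "(\<lambda>x. z \<otimes>\<^bsub>G\<^esub> x) -` A \<inter> space \<mu> \<in> sets \<mu>"
    and emeasure_translate: "emeasure \<mu> ((\<lambda>x. z \<otimes>\<^bsub>G\<^esub> x) -` A \<inter> space \<mu>) = emeasure \<mu> A"
  using measurable_sets[OF measurable_translate[OF assms(1)] assms(2)]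
    emeasure_distr[OF measurable_translate[OF assms(1)] assms(2)]
  by (simp_all add: distr_translate[OF assms(1)])

lemma measure_translate:
  "z \<in> carrier G \<Longrightarrow> A \<in> sets \<mu> \<Longrightarrow> measure \<mu> ((\<lambda>x. z \<otimes>\<^bsub>G\<^esub> x) -` A \<inter> space \<mu>) = measure \<mu> A"
  by (simp add: measure_def emeasure_translate)

lemma null_sets_translate:
  "z \<in> carrier G \<Longrightarrow> A \<in> null_sets \<mu> \<Longrightarrow> (\<lambda>x. z \<otimes>\<^bsub>G\<^esub> x) -` A \<inter> space \<mu> \<in> null_sets \<mu>"
  by (simp add: null_sets_def sets_translate emeasure_translate)

subsection \<open>A zero-one law for finitely supported translations\<close>

definition finsupp :: "(nat \<Rightarrow> 'a) set" where
  "finsupp = {w \<in> carrier G. finite {n. w n \<noteq> \<one>}}"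

definition finsupp_invariant :: "(nat \<Rightarrow> 'a) set \<Rightarrow> bool" where
  "finsupp_invariant T \<longleftrightarrow> (\<forall>w\<in>finsupp. (\<lambda>x. w \<otimes>\<^bsub>G\<^esub> x) -` T \<inter> carrier G = T)"

definition cylinder :: "nat set \<Rightarrow> (nat \<Rightarrow> 'a set) \<Rightarrow> (nat \<Rightarrow> 'a) set" where
  "cylinder J F = {x \<in> carrier G. \<forall>j\<in>J. x j \<in> F j}"

lemma subgroup_finsupp: "subgroup finsupp G"
proof -
  have "subgroup {x \<in> \<Pi>\<^sub>E i\<in>UNIV. carrier \<Gamma>. finite {i \<in> UNIV. x i \<noteq> \<one>}} G"
    unfolding power_group_def by (rule subgroup_sum_group) (rule is_group)
  then show ?thesis by (simp add: finsupp_def power_group_def)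
qed

lemma countable_finsupp: "countable finsupp"
proof -
  have "finsupp \<subseteq> (\<lambda>xs n. if n < length xs then xs ! n else \<one>) ` lists (carrier \<Gamma>)"
  proof
    fix w assume w: "w \<in> finsupp"
    then obtain N where N: "\<And>n. w n \<noteq> \<one> \<Longrightarrow> n < N"
      unfolding finsupp_def using finite_nat_set_iff_bounded by auto
    then have "w = (\<lambda>n. if n < length (map w [0..<N]) then map w [0..<N] ! n else \<one>)"
      by force
    moreover have "map w [0..<N] \<in> lists (carrier \<Gamma>)"
      using w by (auto simp: finsupp_def carrier_power_group)
    ultimately show "w \<in> (\<lambda>xs n. if n < length xs then xs ! n else \<one>) ` lists (carrier \<Gamma>)"
      by blast
  qed
  moreover have "countable (lists (carrier \<Gamma>))"
    using finite_carrier by (simp add: countable_finite)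
  ultimately show ?thesis by (blast intro: countable_subset)
qed

lemma ulim_finsupp:
  assumes "free_ultrafilter U" and "w \<in> finsupp"
  shows "ulim \<Gamma> U w = \<one>"
proof -
  have "ulim \<Gamma> U w = ulim \<Gamma> U (\<lambda>_. \<one>)"
    using assms(2) by (intro ulim_eq_if_finite_diff[OF assms(1) finite_carrier]) (auto simp: finsupp_def)
  then show ?thesis using ulim_const[OF assms(1) one_closed] by simp
qed

lemma cylinder_eq_prod_emb:
  "cylinder J F = prod_emb UNIV (\<lambda>_. uniform_count_measure (carrier \<Gamma>)) J (Pi\<^sub>E J F)"
  by (auto simp: cylinder_def prod_emb_def space_PiM PiE_iff space_uniform_count_measure
      carrier_power_group)

lemma sets_cylinder:
  assumes "finite J" and "\<And>j. j \<in> J \<Longrightarrow> F j \<subseteq> carrier \<Gamma>"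
  shows "cylinder J F \<in> sets \<mu>"
  unfolding cylinder_eq_prod_emb haar_power_def
  using assms by (intro sets_PiM_I) (auto simp: sets_uniform_count_measure)

lemma finsupp_invariant_carrier: "finsupp_invariant (carrier G)"
proof -
  interpret G: group G by (rule group_power_group[OF is_group])
  show ?thesis
    using subgroup.subset[OF subgroup_finsupp] unfolding finsupp_invariant_def by auto
qed

lemma measure_Int_point_cylinder:
  assumes "T \<in> sets \<mu>" and inv: "finsupp_invariant T"
    and "finite J" and d: "\<And>j. j \<in> J \<Longrightarrow> d j \<in> carrier \<Gamma>"
  shows "measure \<mu> (T \<inter> cylinder J (\<lambda>j. {d j})) = measure \<mu> (T \<inter> cylinder J (\<lambda>_. {\<one>}))"
proof -
  define w where "w n = (if n \<in> J then inv (d n) else \<one>)" for n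
  have w: "w \<in> finsupp"
    using d \<open>finite J\<close> by (auto simp: finsupp_def carrier_power_group w_def intro: finite_subset)
  then have wG: "w \<in> carrier G" by (simp add: finsupp_def)
  have "(\<lambda>x. w \<otimes>\<^bsub>G\<^esub> x) -` cylinder J (\<lambda>_. {\<one>}) \<inter> carrier G = cylinder J (\<lambda>j. {d j})"
    using d wG by (auto simp: cylinder_def w_def mult_power_group carrier_power_group inv_solve_left')
  moreover have "(\<lambda>x. w \<otimes>\<^bsub>G\<^esub> x) -` T \<inter> carrier G = T"
    using inv w by (simp add: finsupp_invariant_def)
  ultimately have eq: "(\<lambda>x. w \<otimes>\<^bsub>G\<^esub> x) -` (T \<inter> cylinder J (\<lambda>_. {\<one>})) \<inter> space \<mu>
      = T \<inter> cylinder J (\<lambda>j. {d j})"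
    by (auto simp: space_haar_power)
  have "measure \<mu> ((\<lambda>x. w \<otimes>\<^bsub>G\<^esub> x) -` (T \<inter> cylinder J (\<lambda>_. {\<one>})) \<inter> space \<mu>)
      = measure \<mu> (T \<inter> cylinder J (\<lambda>_. {\<one>}))"
    using assms(1) sets_cylinder[OF \<open>finite J\<close>, of "\<lambda>_. {\<one>}"] by (intro measure_translate[OF wG]) auto
  then show ?thesis by (simp only: eq)
qed

lemma measure_Int_cylinder_card:
  assumes T: "T \<in> sets \<mu>" and inv: "finsupp_invariant T"
    and J: "finite J" and F: "\<And>j. j \<in> J \<Longrightarrow> F j \<subseteq> carrier \<Gamma>"
  shows "measure \<mu> (T \<inter> cylinder J F) = card (Pi\<^sub>E J F) * measure \<mu> (T \<inter> cylinder J (\<lambda>_. {\<one>}))"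
proof -
  interpret prob_space \<mu> by (rule prob_space_haar_power)
  have "T \<inter> cylinder J F = (\<Union>d\<in>Pi\<^sub>E J F. T \<inter> cylinder J (\<lambda>j. {d j}))"
    by (auto simp: cylinder_def PiE_iff intro!: bexI[of _ "restrict _ J"])
  moreover have "measure \<mu> (\<Union>d\<in>Pi\<^sub>E J F. T \<inter> cylinder J (\<lambda>j. {d j}))
      = (\<Sum>d\<in>Pi\<^sub>E J F. measure \<mu> (T \<inter> cylinder J (\<lambda>j. {d j})))"
  proof (rule measure_finite_Union)
    show "finite (Pi\<^sub>E J F)" using J F finite_carrier by (intro finite_PiE) (auto intro: finite_subset)
    show "(\<lambda>d. T \<inter> cylinder J (\<lambda>j. {d j})) ` Pi\<^sub>E J F \<subseteq> sets \<mu>"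
      using T J F by (auto simp: PiE_iff intro!: sets_cylinder)
    show "disjoint_family_on (\<lambda>d. T \<inter> cylinder J (\<lambda>j. {d j})) (Pi\<^sub>E J F)"
      by (auto simp: disjoint_family_on_def cylinder_def dest: PiE_ext)
  qed (simp add: emeasure_eq_measure)
  moreover have "measure \<mu> (T \<inter> cylinder J (\<lambda>j. {d j})) = measure \<mu> (T \<inter> cylinder J (\<lambda>_. {\<one>}))"
    if "d \<in> Pi\<^sub>E J F" for d
    using that F by (intro measure_Int_point_cylinder[OF T inv J]) auto
  ultimately show ?thesis by simp
qed

lemma measure_Int_cylinder:
  assumes T: "T \<in> sets \<mu>" and inv: "finsupp_invariant T"
    and J: "finite J" and F: "\<And>j. j \<in> J \<Longrightarrow> F j \<subseteq> carrier \<Gamma>"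
  shows "measure \<mu> (T \<inter> cylinder J F) = measure \<mu> T * measure \<mu> (cylinder J F)"
proof -
  interpret prob_space \<mu> by (rule prob_space_haar_power)
  let ?a = "measure \<mu> (T \<inter> cylinder J (\<lambda>_. {\<one>}))"
  let ?b = "measure \<mu> (cylinder J (\<lambda>_. {\<one>}))"
  let ?N = "real (card (Pi\<^sub>E J (\<lambda>_. carrier \<Gamma>)))"
  have G: "carrier G \<in> sets \<mu>" "finsupp_invariant (carrier G)"
    using finsupp_invariant_carrier by (auto simp flip: space_haar_power)
  have full: "S \<inter> cylinder J (\<lambda>_. carrier \<Gamma>) = S" if "S \<subseteq> carrier G" for S
    using that by (auto simp: cylinder_def carrier_power_group)
  have "measure \<mu> T = ?N * ?a"
    using measure_Int_cylinder_card[OF T inv J, of "\<lambda>_. carrier \<Gamma>"] full sets.sets_into_space[OF T]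
    by (simp add: space_haar_power)
  moreover have "1 = ?N * ?b"
    using measure_Int_cylinder_card[OF G J, of "\<lambda>_. carrier \<Gamma>"] full[of "carrier G"] prob_space
    by (simp add: space_haar_power cylinder_def Int_absorb1)
  moreover have "measure \<mu> (cylinder J F) = card (Pi\<^sub>E J F) * ?b"
    using measure_Int_cylinder_card[OF G J F] by (simp add: cylinder_def Int_absorb1)
  ultimately have "measure \<mu> T * measure \<mu> (cylinder J F) = card (Pi\<^sub>E J F) * ?a"
    by (simp add: algebra_simps)
  with measure_Int_cylinder_card[OF T inv J F] show ?thesis by simp
qed

(* The finite measures \<open>A \<mapsto> \<mu> (T \<inter> A)\<close> and \<open>\<mu> T \<cdot> \<mu>\<close> agree on cylinders, hence everywhere;
   at \<open>A = T\<close> this gives \<open>\<mu> T = (\<mu> T)\<^sup>2\<close>. *)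
lemma finsupp_invariant_zero_one:
  assumes T: "T \<in> sets \<mu>" and inv: "finsupp_invariant T"
  shows "measure \<mu> T = 0 \<or> measure \<mu> T = 1"
proof -
  interpret prob_space \<mu> by (rule prob_space_haar_power)
  let ?M = "\<lambda>_::nat. uniform_count_measure (carrier \<Gamma>)"
  let ?m = "measure \<mu> T"
  have "density \<mu> (indicator T) = density \<mu> (\<lambda>_. ennreal ?m)"
  proof (rule measure_eqI_PiM_infinite[where I = UNIV and M = ?M])
    show "sets (density \<mu> (indicator T)) = sets (PiM UNIV ?M)"
      and "sets (density \<mu> (\<lambda>_. ennreal ?m)) = sets (PiM UNIV ?M)"
      by (simp_all add: haar_power_def)
    show "finite_measure (density \<mu> (indicator T))" by (rule finite_measure_restricted[OF T])
    fix J :: "nat set" and A :: "nat \<Rightarrow> 'a set"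
    assume J: "finite J" "J \<subseteq> UNIV" and "\<And>j. j \<in> J \<Longrightarrow> A j \<in> sets (?M j)"
    then have A: "\<And>j. j \<in> J \<Longrightarrow> A j \<subseteq> carrier \<Gamma>" by (simp add: sets_uniform_count_measure)
    have C: "cylinder J A \<in> sets \<mu>" by (rule sets_cylinder[OF J(1) A])
    have "emeasure (density \<mu> (indicator T)) (cylinder J A) = emeasure \<mu> (T \<inter> cylinder J A)"
      by (rule emeasure_restricted[OF T C])
    also have "\<dots> = ennreal ?m * emeasure \<mu> (cylinder J A)"
      using measure_Int_cylinder[OF T inv J(1) A] by (simp add: emeasure_eq_measure ennreal_mult)
    also have "\<dots> = emeasure (density \<mu> (\<lambda>_. ennreal ?m)) (cylinder J A)"
      by (rule emeasure_density_const[OF C, symmetric])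
    finally show "emeasure (density \<mu> (indicator T)) (prod_emb UNIV ?M J (Pi\<^sub>E J A))
        = emeasure (density \<mu> (\<lambda>_. ennreal ?m)) (prod_emb UNIV ?M J (Pi\<^sub>E J A))"
      by (simp only: cylinder_eq_prod_emb)
  qed
  then have "emeasure (density \<mu> (indicator T)) T = emeasure (density \<mu> (\<lambda>_. ennreal ?m)) T"
    by simp
  then have "ennreal ?m = ennreal (?m * ?m)"
    by (simp add: emeasure_restricted[OF T T] emeasure_density_const[OF T] emeasure_eq_measure
        ennreal_mult)
  then have "?m = ?m * ?m" by simp
  then show ?thesis by (metis mult_cancel_left1 mult.commute)
qed

lemma finsupp_invariant_INT_translates:
  "finsupp_invariant (\<Inter>w\<in>finsupp. (\<lambda>x. w \<otimes>\<^bsub>G\<^esub> x) -` S \<inter> carrier G)"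
proof -
  interpret G: group G by (rule group_power_group[OF is_group])
  interpret W: subgroup finsupp G by (rule subgroup_finsupp)
  define T where "T = (\<Inter>w\<in>finsupp. (\<lambda>x. w \<otimes>\<^bsub>G\<^esub> x) -` S \<inter> carrier G)"
  have "v \<otimes>\<^bsub>G\<^esub> x \<in> T \<longleftrightarrow> x \<in> T" if v: "v \<in> finsupp" and x: "x \<in> carrier G" for v x
  proof
    assume vx: "v \<otimes>\<^bsub>G\<^esub> x \<in> T"
    have "u \<otimes>\<^bsub>G\<^esub> x \<in> S" if u: "u \<in> finsupp" for u
    proof -
      have "(u \<otimes>\<^bsub>G\<^esub> inv\<^bsub>G\<^esub> v) \<otimes>\<^bsub>G\<^esub> (v \<otimes>\<^bsub>G\<^esub> x) \<in> S"
        using vx u v W.m_closed W.m_inv_closed unfolding T_def by blast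
      moreover have "inv\<^bsub>G\<^esub> v \<otimes>\<^bsub>G\<^esub> (v \<otimes>\<^bsub>G\<^esub> x) = x"
        using v x by (simp add: G.m_assoc[symmetric])
      ultimately show ?thesis using u v x by (simp add: G.m_assoc)
    qed
    then show "x \<in> T" using x by (auto simp: T_def)
  next
    assume "x \<in> T"
    then have "(w \<otimes>\<^bsub>G\<^esub> v) \<otimes>\<^bsub>G\<^esub> x \<in> S" if "w \<in> finsupp" for w
      using that v W.m_closed unfolding T_def by blast
    with v x show "v \<otimes>\<^bsub>G\<^esub> x \<in> T" unfolding T_def by (intro INT_I) (simp add: G.m_assoc)
  qed
  moreover have "T \<subseteq> carrier G" unfolding T_def using W.one_closed by blast
  ultimately show ?thesis
    unfolding finsupp_invariant_def T_def[symmetric] by blast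
qed

(* \<open>T\<close> is the largest invariant subset of \<open>S\<close>; it is measurable because \<open>finsupp\<close> is countable. *)
lemma completion_finsupp_invariant_core:
  assumes "H \<in> sets (completion \<mu>)" and inv: "finsupp_invariant H"
  obtains T Z where "T \<in> sets \<mu>" "finsupp_invariant T" "Z \<in> null_sets \<mu>" "T \<subseteq> H" "H \<subseteq> T \<union> Z"
proof -
  obtain S N N' where H: "H = S \<union> N" "N \<subseteq> N'" and N': "N' \<in> null_sets \<mu>" and S: "S \<in> sets \<mu>"
    using assms(1) by (rule sets_completionE)
  define T where "T = (\<Inter>w\<in>finsupp. (\<lambda>x. w \<otimes>\<^bsub>G\<^esub> x) -` S \<inter> carrier G)"
  define Z where "Z = (\<Union>w\<in>finsupp. (\<lambda>x. w \<otimes>\<^bsub>G\<^esub> x) -` N' \<inter> carrier G)"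
  have W: "finsupp \<subseteq> carrier G" "\<one>\<^bsub>G\<^esub> \<in> finsupp"
    using subgroup.subset[OF subgroup_finsupp] subgroup.one_closed[OF subgroup_finsupp] by auto
  have one: "\<one>\<^bsub>G\<^esub> \<otimes>\<^bsub>G\<^esub> x = x" if "x \<in> carrier G" for x
    using that group.is_monoid[OF group_power_group[OF is_group]] by (simp add: monoid.l_one)
  have "T \<in> sets \<mu>"
    unfolding T_def using countable_finsupp W sets_translate[OF _ S]
    by (intro sets.countable_INT') (auto simp: space_haar_power)
  moreover have "Z \<in> null_sets \<mu>"
    unfolding Z_def using countable_finsupp W null_sets_translate[OF _ N']
    by (intro null_sets_UN') (auto simp: space_haar_power)
  moreover have "T \<subseteq> H"
    using W one H(1) by (auto simp: T_def)
  moreover have "H \<subseteq> T \<union> Z"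
  proof
    fix x assume x: "x \<in> H"
    then have "w \<otimes>\<^bsub>G\<^esub> x \<in> S \<union> N'" "x \<in> carrier G" if "w \<in> finsupp" for w
      using inv that H by (auto simp: finsupp_invariant_def)
    then show "x \<in> T \<union> Z"
      using W by (auto simp: T_def Z_def)
  qed
  ultimately show ?thesis
    using that finsupp_invariant_INT_translates unfolding T_def by blast
qed

lemma ulim_mult_const:
  assumes "free_ultrafilter U" and "a \<in> carrier \<Gamma>" and "x \<in> carrier G"
  shows "ulim \<Gamma> U ((\<lambda>_. a) \<otimes>\<^bsub>G\<^esub> x) = a \<otimes> ulim \<Gamma> U x"
  using assms ulim_mult[OF assms(1) finite_carrier is_monoid, of "\<lambda>_. a" x] ulim_const[OF assms(1,2)]
  by (simp add: mult_power_group carrier_power_group)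

lemma finsupp_invariant_vimage_ulim:
  assumes U: "free_ultrafilter U"
  shows "finsupp_invariant {x \<in> carrier G. ulim \<Gamma> U x \<in> B}"
proof -
  interpret \<psi>: group_hom G \<Gamma> "ulim \<Gamma> U" by (rule ulim_group_hom[OF U finite_carrier is_group])
  show ?thesis
    using subgroup.subset[OF subgroup_finsupp] ulim_finsupp[OF U]
    by (auto simp: finsupp_invariant_def)
qed

lemma measure_invariant_subset_vimage_ulim:
  assumes U: "free_ultrafilter U" and "subgroup B \<Gamma>" and c: "c \<in> carrier \<Gamma>" "c \<notin> B"
    and T: "T \<in> sets \<mu>" "finsupp_invariant T" "T \<subseteq> {x \<in> carrier G. ulim \<Gamma> U x \<in> B}"
  shows "measure \<mu> T = 0"
proof (rule ccontr)
  interpret prob_space \<mu> by (rule prob_space_haar_power)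
  interpret B: subgroup B \<Gamma> by fact
  define T' where "T' = (\<lambda>x. (\<lambda>_. inv c) \<otimes>\<^bsub>G\<^esub> x) -` T \<inter> space \<mu>"
  have cG: "(\<lambda>_. inv c) \<in> carrier G" using c by (simp add: carrier_power_group)
  have "T' \<inter> T = {}"
  proof (rule ccontr)
    assume "T' \<inter> T \<noteq> {}"
    then obtain x where x: "x \<in> T" "(\<lambda>_. inv c) \<otimes>\<^bsub>G\<^esub> x \<in> T" "x \<in> carrier G"
      by (auto simp: T'_def space_haar_power)
    then have "ulim \<Gamma> U x \<in> B" "inv c \<otimes> ulim \<Gamma> U x \<in> B"
      using T(3) ulim_mult_const[OF U inv_closed[OF c(1)] x(3)] by auto
    then have "inv (inv c \<otimes> ulim \<Gamma> U x \<otimes> inv (ulim \<Gamma> U x)) \<in> B"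
      and "ulim \<Gamma> U x \<in> carrier \<Gamma>" by simp_all
    with c show False by (simp add: m_assoc)
  qed
  moreover assume "measure \<mu> T \<noteq> 0"
  then have "measure \<mu> T = 1" using finsupp_invariant_zero_one[OF T(1,2)] by simp
  moreover have "measure \<mu> T' = measure \<mu> T" unfolding T'_def by (rule measure_translate[OF cG T(1)])
  moreover have "T' \<in> sets \<mu>" unfolding T'_def by (rule sets_translate[OF cG T(1)])
  ultimately have "measure \<mu> (T' \<union> T) = 2" using T(1) by (simp add: measure_Union)
  then show False using prob_le_1[of "T' \<union> T"] by simp
qed

lemma constant_translates_vimage_ulim_cover:
  assumes U: "free_ultrafilter U" and "\<one> \<in> B"
  shows "space \<mu> \<subseteq>
    (\<Union>a\<in>carrier \<Gamma>. (\<lambda>x. (\<lambda>_. inv a) \<otimes>\<^bsub>G\<^esub> x) -` {x \<in> carrier G. ulim \<Gamma> U x \<in> B} \<inter> space \<mu>)"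
proof
  interpret \<psi>: group_hom G \<Gamma> "ulim \<Gamma> U" by (rule ulim_group_hom[OF U finite_carrier is_group])
  fix x assume x: "x \<in> space \<mu>"
  then have "(\<lambda>_. inv (ulim \<Gamma> U x)) \<otimes>\<^bsub>G\<^esub> x \<in> {x \<in> carrier G. ulim \<Gamma> U x \<in> B}"
    using ulim_mult_const[OF U] assms(2)
    by (auto simp: space_haar_power carrier_power_group mult_power_group)
  with x show "x \<in> (\<Union>a\<in>carrier \<Gamma>. (\<lambda>x. (\<lambda>_. inv a) \<otimes>\<^bsub>G\<^esub> x) -` {x \<in> carrier G. ulim \<Gamma> U x \<in> B} \<inter> space \<mu>)"
    by (auto simp: space_haar_power)
qed

lemma vimage_ulim_not_completion_measurable:
  assumes U: "free_ultrafilter U" and B: "subgroup B \<Gamma>" and proper: "B \<noteq> carrier \<Gamma>"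
  shows "{x \<in> carrier G. ulim \<Gamma> U x \<in> B} \<notin> sets (completion \<mu>)"
proof
  interpret prob_space \<mu> by (rule prob_space_haar_power)
  define H where "H = {x \<in> carrier G. ulim \<Gamma> U x \<in> B}"
  assume "H \<in> sets (completion \<mu>)"
  moreover have "finsupp_invariant H"
    unfolding H_def by (rule finsupp_invariant_vimage_ulim[OF U])
  ultimately obtain T Z where T: "T \<in> sets \<mu>" "finsupp_invariant T" "T \<subseteq> H"
    and Z: "Z \<in> null_sets \<mu>" "H \<subseteq> T \<union> Z"
    by (rule completion_finsupp_invariant_core)
  obtain c where "c \<in> carrier \<Gamma>" "c \<notin> B" using proper subgroup.subset[OF B] by blast
  then have "measure \<mu> T = 0"
    using measure_invariant_subset_vimage_ulim[OF U B _ _ T(1,2)] T(3) unfolding H_def by blast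
  then have "T \<union> Z \<in> null_sets \<mu>"
    using T(1) Z(1) by (intro null_sets.Un) (simp_all add: null_sets_def emeasure_eq_measure)
  then have "(\<Union>a\<in>carrier \<Gamma>. (\<lambda>x. (\<lambda>_. inv a) \<otimes>\<^bsub>G\<^esub> x) -` (T \<union> Z) \<inter> space \<mu>) \<in> null_sets \<mu>"
    using finite_carrier
    by (intro null_sets_UN' countable_finite null_sets_translate) (auto simp: carrier_power_group)
  moreover have "space \<mu> \<subseteq> (\<Union>a\<in>carrier \<Gamma>. (\<lambda>x. (\<lambda>_. inv a) \<otimes>\<^bsub>G\<^esub> x) -` (T \<union> Z) \<inter> space \<mu>)"
    using constant_translates_vimage_ulim_cover[OF U subgroup.one_closed[OF B]] Z(2)
    unfolding H_def by blast
  ultimately have "space \<mu> \<in> null_sets \<mu>" by (meson null_sets_subset sets.top)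
  then show False using emeasure_space_1 by (simp add: null_sets_def)
qed

end

theorem mainTheorem5:
  fixes \<Gamma> :: "('a, 'c) monoid_scheme" and U :: "nat set set" and g :: 'a
  assumes "simple_group \<Gamma>"
    and "finite (carrier \<Gamma>)"
    and "\<not> comm_group \<Gamma>"
    and "free_ultrafilter U"
    and "g \<in> carrier \<Gamma>" and "g \<noteq> \<one>\<^bsub>\<Gamma>\<^esub>"
  shows "subgroup {x \<in> carrier (power_group \<Gamma>). ulim \<Gamma> U x \<in> generate \<Gamma> {g}} (power_group \<Gamma>)
       \<and> \<not> ({x \<in> carrier (power_group \<Gamma>). ulim \<Gamma> U x \<in> generate \<Gamma> {g}} \<lhd> power_group \<Gamma>)
       \<and> \<not> haar_measurable \<Gamma> {x \<in> carrier (power_group \<Gamma>). ulim \<Gamma> U x \<in> generate \<Gamma> {g}}"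
proof -
  interpret simple_group \<Gamma> by fact
  interpret finite_group_power \<Gamma> by unfold_locales fact
  interpret \<psi>: group_hom G \<Gamma> "ulim \<Gamma> U" by (rule ulim_group_hom[OF assms(4,2) is_group])
  have B: "subgroup (generate \<Gamma> {g}) \<Gamma>" using assms(5) by (simp add: generate_is_subgroup)
  have not_normal: "\<not> generate \<Gamma> {g} \<lhd> \<Gamma>"
    by (rule cyclic_subgroup_not_normal[OF assms(3,5,6)])
  then have proper: "generate \<Gamma> {g} \<noteq> carrier \<Gamma>" using normal_self by auto
  show ?thesis
    unfolding haar_measurable_def
    using \<psi>.subgroup_vimage[OF B] not_normal
      \<psi>.normal_vimage_imp_normal[OF ulim_surj[OF assms(4,2)] subgroup.subset[OF B]]
      vimage_ulim_not_completion_measurable[OF assms(4) B proper]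
    by blast
qed

end
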